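(* Let $B$ be a board with set of sinks $S$. If the extended full tilt graph $\hat G_F(B)$ (with sinks $S$) contains an arborescence of weight $w$ converging to its root, then the extended large tilt graph $\hat G_L(B,S)$ contains an arborescence of weight at most $w$ converging to its root.
   Context: Pixels are unit squares indexed by $\mathbb{Z}^2$. A board $B=(V,E)$ is a finite subgraph of the square grid graph on $\mathbb{Z}^2$; its boundary consists of pixel sides not shared with a neighbouring pixel joined by an edge of $E$. $S\subseteq V$ are sinks. For a pixel $p$, its row (column) segment is the maximal set of pixels reachable from $p$ using only horizontal (vertical) edges of $E$; $p^\ell,p^r$ are the leftmost/rightmost pixels of its row segment and $p^u,p^d$ the topmost/bottommost pixels of its column segment. The full tilt graph $G_F(B)$ has vertex set $V$ and edges $(p,p^x)$ for $x\in\{\ell,r,u,d\}$, $p^x\ne p$. A corner pixel is a pixel $p$ with $p=p^x=p^y$ for some $x\in\{\ell,r\}$, $y\in\{u,d\}$. The large tilt graph $G_L(B,S)$ is the subgraph of $G_F(B)$ induced by the vertex set consisting of (i) all pixels reachable in $G_F(B)$ from corner pixels, (ii) every sink $s$ and $s^\ell,s^r,s^u,s^d$, (iii) for every reflex corner of the boundary, the endpoints of the row and column segments of the pixels incident to that corner, (iv) all pixels on the intersection of a row segment and a column segment each containing a pixel included in (i)–(iii). Extended graph: for a directed graph $G$ with sinks $S$, $\hat G$ has vertex set $V(G)\cup\{r\}$ with new root $r$ and edges: every edge of $G$ with weight $0$; for every edge $(p,q)$ of $G$ with $(q,p)$ not an edge of $G$, the inverse edge $(q,p)$ with weight $1$;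 and $(s,r)$ with weight $0$ for $s\in S$. An arborescence converging to $r$ is a spanning subgraph in which every vertex other than $r$ has exactly one outgoing edge and a directed path to $r$; its weight is the sum of its edge weights. *)

theory Defs
  imports Main
begin

type_synonym pixel = "int \<times> int"

text \<open>Pixel (x,y) is the unit square [x,x+1] x [y,y+1]; y grows upwards.
  A board is given by its pixel set V and its edge set E, an edge being a
  two-element set of grid-adjacent pixels of V.\<close>

definition grid_adj :: "pixel \<Rightarrow> pixel \<Rightarrow> bool" where
  "grid_adj p q \<longleftrightarrow> \<bar>fst p - fst q\<bar> + \<bar>snd p - snd q\<bar> = 1"

definition board :: "pixel set \<Rightarrow> pixel set set \<Rightarrow> bool" where
  "board V E \<longleftrightarrow> finite V \<and>
     E \<subseteq> {{p, q} | p q. p \<in> V \<and> q \<in> V \<and> grid_adj p q}"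

definition hrel :: "pixel set set \<Rightarrow> (pixel \<times> pixel) set" where
  "hrel E = {(p, q). {p, q} \<in> E \<and> p \<noteq> q \<and> snd p = snd q}"

definition vrel :: "pixel set set \<Rightarrow> (pixel \<times> pixel) set" where
  "vrel E = {(p, q). {p, q} \<in> E \<and> p \<noteq> q \<and> fst p = fst q}"

definition rowseg :: "pixel set set \<Rightarrow> pixel \<Rightarrow> pixel set" where
  "rowseg E p = {q. (p, q) \<in> (hrel E)\<^sup>*}"

definition colseg :: "pixel set set \<Rightarrow> pixel \<Rightarrow> pixel set" where
  "colseg E p = {q. (p, q) \<in> (vrel E)\<^sup>*}"

datatype dir = L | R | U | D

fun tilt :: "pixel set set \<Rightarrow> dir \<Rightarrow> pixel \<Rightarrow> pixel" where
  "tilt E L p = (THE q. q \<in> rowseg E p \<and> (\<forall>q'\<in>rowseg E p. fst q \<le> fst q'))"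
| "tilt E R p = (THE q. q \<in> rowseg E p \<and> (\<forall>q'\<in>rowseg E p. fst q' \<le> fst q))"
| "tilt E U p = (THE q. q \<in> colseg E p \<and> (\<forall>q'\<in>colseg E p. snd q' \<le> snd q))"
| "tilt E D p = (THE q. q \<in> colseg E p \<and> (\<forall>q'\<in>colseg E p. snd q \<le> snd q'))"

definition full_tilt_edges :: "pixel set \<Rightarrow> pixel set set \<Rightarrow> (pixel \<times> pixel) set" where
  "full_tilt_edges V E = {(p, tilt E d p) | p d. p \<in> V \<and> tilt E d p \<noteq> p}"

definition corner_pixel :: "pixel set \<Rightarrow> pixel set set \<Rightarrow> pixel \<Rightarrow> bool" where
  "corner_pixel V E p \<longleftrightarrow> p \<in> V \<and>
     (\<exists>x \<in> {L, R}. \<exists>y \<in> {U, D}. tilt E x p = p \<and> tilt E y p = p)"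

text \<open>A lattice point c = (a,b) is a corner of the four pixels around it.\<close>
definition incident :: "int \<times> int \<Rightarrow> pixel set" where
  "incident c = {(fst c - 1, snd c - 1), (fst c, snd c - 1), (fst c - 1, snd c), (fst c, snd c)}"

text \<open>Horizontal / vertical neighbour of an incident pixel across the corner c.\<close>
definition hx :: "int \<times> int \<Rightarrow> pixel \<Rightarrow> pixel" where
  "hx c p = (2 * fst c - 1 - fst p, snd p)"

definition vy :: "int \<times> int \<Rightarrow> pixel \<Rightarrow> pixel" where
  "vy c p = (fst p, 2 * snd c - 1 - snd p)"

definition boundary_side :: "pixel set \<Rightarrow> pixel set set \<Rightarrow> pixel \<Rightarrow> pixel \<Rightarrow> bool" where
  "boundary_side V E p q \<longleftrightarrow> (p \<in> V \<or> q \<in> V) \<and> {p, q} \<notin> E"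

text \<open>c is a reflex corner of the boundary: the boundary sides meeting at c enclose,
  on the board side, an angle larger than 180 degrees, i.e. some pixel p of the board
  incident to c is joined to both its neighbours across c, while at least one of the
  two remaining sides at c is a boundary side.\<close>
definition reflex_corner :: "pixel set \<Rightarrow> pixel set set \<Rightarrow> int \<times> int \<Rightarrow> bool" where
  "reflex_corner V E c \<longleftrightarrow> (\<exists>p \<in> incident c. p \<in> V \<and>
      {p, hx c p} \<in> E \<and> {p, vy c p} \<in> E \<and>
      (boundary_side V E (hx c p) (hx c (vy c p)) \<or>
       boundary_side V E (vy c p) (hx c (vy c p))))"

definition large_base :: "pixel set \<Rightarrow> pixel set set \<Rightarrow> pixel set \<Rightarrow> pixel set" where
  "large_base V E S =
     {q. \<exists>c. corner_pixel V E c \<and> (c, q) \<in> (full_tilt_edges V E)\<^sup>*}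
   \<union> S \<union> {tilt E d s | s d. s \<in> S}
   \<union> {tilt E d p | c p d. reflex_corner V E c \<and> p \<in> incident c \<and> p \<in> V}"

definition large_vertices :: "pixel set \<Rightarrow> pixel set set \<Rightarrow> pixel set \<Rightarrow> pixel set" where
  "large_vertices V E S = large_base V E S \<union>
     {p. \<exists>a \<in> large_base V E S. \<exists>b \<in> large_base V E S. p \<in> rowseg E a \<and> p \<in> colseg E b}"

definition large_tilt_edges :: "pixel set \<Rightarrow> pixel set set \<Rightarrow> pixel set \<Rightarrow> (pixel \<times> pixel) set" where
  "large_tilt_edges V E S = {(p, q) \<in> full_tilt_edges V E.
       p \<in> large_vertices V E S \<and> q \<in> large_vertices V E S}"

text \<open>The new root r is None; old vertices v are Some v.\<close>
definition ext_vertices :: "'a set \<Rightarrow> 'a option set" where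
  "ext_vertices VG = Some ` VG \<union> {None}"

definition ext_edges :: "('a \<times> 'a) set \<Rightarrow> 'a set \<Rightarrow> ('a option \<times> 'a option) set" where
  "ext_edges EG S =
     {(Some p, Some q) | p q. (p, q) \<in> EG}
   \<union> {(Some q, Some p) | p q. (p, q) \<in> EG \<and> (q, p) \<notin> EG}
   \<union> {(Some s, None) | s. s \<in> S}"

definition ext_weight :: "('a \<times> 'a) set \<Rightarrow> 'a option \<times> 'a option \<Rightarrow> nat" where
  "ext_weight EG e = (case e of (Some p, Some q) \<Rightarrow> (if (p, q) \<in> EG then 0 else 1) | _ \<Rightarrow> 0)"

definition arborescence_to :: "'v set \<Rightarrow> ('v \<times> 'v) set \<Rightarrow> 'v \<Rightarrow> ('v \<times> 'v) set \<Rightarrow> bool" where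
  "arborescence_to VH EH r T \<longleftrightarrow> T \<subseteq> EH \<and>
     (\<forall>v \<in> VH - {r}. (\<exists>!w. (v, w) \<in> T) \<and> (v, r) \<in> T\<^sup>+)"

definition tree_weight :: "('a \<times> 'a) set \<Rightarrow> ('a option \<times> 'a option) set \<Rightarrow> nat" where
  "tree_weight EG T = (\<Sum>e\<in>T. ext_weight EG e)"

end

theory Submission
  imports Defs
begin

(*
  The large tilt graph is the image of a retraction of the full tilt graph.  Say that a
  row or column segment meets the base if it contains a pixel of (i)-(iii).  A pixel
  not joined to its left or its right neighbour lies on a column segment meeting the
  base: walking up that column one reaches either a corner pixel or a reflex corner,
  and both put a tilt endpoint of the column into the base; symmetrically for rows.
  Consequently, all column segments between a pixel (x, y) and the nearest column to
  its left whose segment meets the base are translates of each other, and likewise for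
  the row segments between (x, y) and the nearest such row below it.  The map sending
  (x, y) to that column and that row therefore lands in the large vertices, fixes them,
  and commutes with all four tilts, so it maps each tilt edge to a tilt edge or
  collapses it.

  Such a retraction transports arborescences: each large vertex v follows the image of
  the tree edge leaving the preimage of v closest to the root.  This edge is not
  collapsed, since its head is even closer to the root; its weight does not increase;
  and the depths of the chosen preimages strictly decrease along the new edges, which
  therefore form an arborescence of no larger weight.
*)

section \<open>Retracting arborescences\<close>

lemma arborescence_to_depth:
  assumes arb: "arborescence_to VH EH r T" and T_sub: "T \<subseteq> VH \<times> VH"
  obtains depth :: "'v \<Rightarrow> nat" where "\<And>v w. (v, w) \<in> T \<Longrightarrow> v \<noteq> r \<Longrightarrow> depth w < depth v"
proof -
  define succ where "succ v = (THE w. (v, w) \<in> T)" for v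
  have succ: "succ v = w" if "(v, w) \<in> T" "v \<noteq> r" for v w
  proof -
    have "\<exists>!w. (v, w) \<in> T" using arb that T_sub unfolding arborescence_to_def by blast
    then show ?thesis unfolding succ_def using that(1) by (blast intro: the1_equality)
  qed
  have reaches_root: "\<exists>n. (succ ^^ n) v = r" if "(v, r) \<in> T\<^sup>+" for v
    using that
  proof (induction rule: converse_trancl_induct)
    case (base v)
    then have "(succ ^^ (if v = r then 0 else 1)) v = r" using succ by auto
    then show ?case by blast
  next
    case (step v w)
    then obtain n where "(succ ^^ n) w = r" by blast
    then have "(succ ^^ (if v = r then 0 else Suc n)) v = r"
      using succ[OF step.hyps(1)] by (simp add: funpow_Suc_right del: funpow.simps)
    then show ?case by blast
  qed
  define depth where "depth v = (LEAST n. (succ ^^ n) v = r)" for v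
  show ?thesis
  proof
    fix v w assume vw: "(v, w) \<in> T" and "v \<noteq> r"
    have "(succ ^^ depth v) v = r"
    proof -
      have "v \<in> VH - {r}" using vw \<open>v \<noteq> r\<close> T_sub by auto
      then obtain n where "(succ ^^ n) v = r"
        using reaches_root arb unfolding arborescence_to_def by blast
      then show ?thesis unfolding depth_def by (rule LeastI)
    qed
    moreover have "depth v \<noteq> 0" using calculation \<open>v \<noteq> r\<close> by (metis funpow_0)
    then obtain m where m: "depth v = Suc m" using not0_implies_Suc by blast
    ultimately have "(succ ^^ m) w = r"
      using succ[OF vw \<open>v \<noteq> r\<close>] by (simp add: funpow_Suc_right del: funpow.simps)
    then have "depth w \<le> m" unfolding depth_def by (rule Least_le)
    then show "depth w < depth v" using m by simp
  qed
qed

lemma arborescence_to_of_successor: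
  assumes edge: "\<And>v. v \<in> A \<Longrightarrow> (Some v, g v) \<in> EH"
    and decreasing: "\<And>v v'. v \<in> A \<Longrightarrow> g v = Some v' \<Longrightarrow> v' \<in> A \<and> m v' < (m v :: nat)"
  shows "arborescence_to (ext_vertices A) EH None ((\<lambda>v. (Some v, g v)) ` A)"
    (is "arborescence_to _ _ _ ?T")
proof -
  have reaches_root: "(Some v, None) \<in> ?T\<^sup>+" if "v \<in> A" for v
    using that
  proof (induction "m v" arbitrary: v rule: less_induct)
    case less
    have "(Some v, g v) \<in> ?T" using less.prems by blast
    then show ?case using decreasing[OF less.prems] less.hyps
      by (cases "g v") (auto intro: trancl_into_trancl2)
  qed
  show ?thesis
    unfolding arborescence_to_def ext_vertices_def using edge reaches_root by auto
qed

lemma tree_weight_image_le: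
  assumes "finite T" "e ` A \<subseteq> T" "inj_on e A" "inj_on h A"
    and "\<And>v. v \<in> A \<Longrightarrow> ext_weight G' (h v) \<le> ext_weight G (e v)"
  shows "tree_weight G' (h ` A) \<le> tree_weight G T"
proof -
  have "tree_weight G' (h ` A) = (\<Sum>v\<in>A. ext_weight G' (h v))"
    unfolding tree_weight_def using assms(4) by (simp add: sum.reindex)
  also have "\<dots> \<le> (\<Sum>v\<in>A. ext_weight G (e v))" using assms(5) by (rule sum_mono)
  also have "\<dots> = sum (ext_weight G) (e ` A)" using assms(3) by (simp add: sum.reindex)
  also have "\<dots> \<le> tree_weight G T"
    unfolding tree_weight_def using assms(1,2) by (rule sum_mono2) simp
  finally show ?thesis .
qed

locale graph_retraction =
  fixes V :: "'a set" and G :: "('a \<times> 'a) set" and L :: "'a set" and \<rho> :: "'a \<Rightarrow> 'a"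
  assumes finite_V: "finite V"
    and G_subset: "G \<subseteq> V \<times> V"
    and retract_in: "\<And>u. u \<in> V \<Longrightarrow> \<rho> u \<in> L"
    and retract_fixes: "\<And>u. u \<in> L \<Longrightarrow> \<rho> u = u"
    and retract_edge: "\<And>u v. (u, v) \<in> G \<Longrightarrow> \<rho> u \<noteq> \<rho> v \<Longrightarrow> (\<rho> u, \<rho> v) \<in> G"
    and L_subset: "L \<subseteq> V"
begin

lemma least_preimage:
  fixes f :: "'a \<Rightarrow> 'b :: linorder"
  obtains rep where "\<And>v. v \<in> L \<Longrightarrow> rep v \<in> V \<and> \<rho> (rep v) = v"
    and "\<And>v y. v \<in> L \<Longrightarrow> y \<in> V \<Longrightarrow> \<rho> y = v \<Longrightarrow> f (rep v) \<le> f y"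
proof (rule that[of "\<lambda>v. arg_min_on f {y \<in> V. \<rho> y = v}"])
  fix v assume "v \<in> L"
  then have "finite {y \<in> V. \<rho> y = v}" "{y \<in> V. \<rho> y = v} \<noteq> {}"
    using finite_V L_subset retract_fixes by auto
  note min = arg_min_if_finite[OF this, of f]
  show "arg_min_on f {y \<in> V. \<rho> y = v} \<in> V \<and> \<rho> (arg_min_on f {y \<in> V. \<rho> y = v}) = v"
    using min(1) by simp
  show "f (arg_min_on f {y \<in> V. \<rho> y = v}) \<le> f y" if "y \<in> V" "\<rho> y = v" for y
    using min(2) that by (simp add: not_less)
qed

lemma ext_edge_retract:
  assumes "S \<subseteq> L" and ab: "(a, b) \<in> ext_edges G S" and "map_option \<rho> a \<noteq> map_option \<rho> b"
  shows "(map_option \<rho> a, map_option \<rho> b) \<in> ext_edges (G \<inter> L \<times> L) S \<and>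
    ext_weight (G \<inter> L \<times> L) (map_option \<rho> a, map_option \<rho> b) \<le> ext_weight G (a, b)"
proof -
  have in_L: "\<rho> p \<in> L" "\<rho> q \<in> L" if "(p, q) \<in> G" for p q
    using that G_subset retract_in by auto
  from ab consider
      (forward) p q where "a = Some p" "b = Some q" "(p, q) \<in> G"
    | (backward) p q where "a = Some q" "b = Some p" "(p, q) \<in> G" "(q, p) \<notin> G"
    | (sink) s where "a = Some s" "b = None" "s \<in> S"
    unfolding ext_edges_def by blast
  then show ?thesis
  proof cases
    case forward
    then show ?thesis using assms retract_edge[of p q] in_L[of p q]
      by (auto simp: ext_edges_def ext_weight_def)
  next
    case backward
    then show ?thesis using assms retract_edge[of p q] in_L[of p q]
      by (auto simp: ext_edges_def ext_weight_def)
  next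
    case sink
    then show ?thesis using assms retract_fixes by (auto simp: ext_edges_def ext_weight_def)
  qed
qed

theorem arborescence_retract:
  assumes S_L: "S \<subseteq> L" and arb: "arborescence_to (ext_vertices V) (ext_edges G S) None T"
  shows "\<exists>T'. arborescence_to (ext_vertices L) (ext_edges (G \<inter> L \<times> L) S) None T' \<and>
    tree_weight (G \<inter> L \<times> L) T' \<le> tree_weight G T"
proof -
  have T_ext: "T \<subseteq> ext_edges G S" using arb unfolding arborescence_to_def by blast
  have ext_sub: "ext_edges G S \<subseteq> ext_vertices V \<times> ext_vertices V"
    using G_subset S_L L_subset unfolding ext_edges_def ext_vertices_def by auto
  obtain depth :: "'a option \<Rightarrow> nat"
    where depth: "\<And>a b. (a, b) \<in> T \<Longrightarrow> a \<noteq> None \<Longrightarrow> depth b < depth a"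
    using arborescence_to_depth[OF arb order_trans[OF T_ext ext_sub]] by metis
  define succ where "succ y = (THE b. (Some y, b) \<in> T)" for y
  have succ: "(Some y, succ y) \<in> T" if "y \<in> V" for y
  proof -
    have "\<exists>!b. (Some y, b) \<in> T" using arb that unfolding arborescence_to_def ext_vertices_def
      by blast
    then show ?thesis unfolding succ_def by (rule theI')
  qed
  obtain rep where rep: "\<And>v. v \<in> L \<Longrightarrow> rep v \<in> V \<and> \<rho> (rep v) = v"
    and rep_min: "\<And>v y. v \<in> L \<Longrightarrow> y \<in> V \<Longrightarrow> \<rho> y = v \<Longrightarrow> depth (Some (rep v)) \<le> depth (Some y)"
    using least_preimage[of "depth \<circ> Some"] by auto
  define e where "e v = (Some (rep v), succ (rep v))" for v
  define g where "g v = map_option \<rho> (succ (rep v))" for v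
  have e_image: "map_prod (map_option \<rho>) (map_option \<rho>) (e v) = (Some v, g v)" if "v \<in> L" for v
    using rep[OF that] by (simp add: e_def g_def)
  have g_decreasing: "v' \<in> L \<and> depth (Some (rep v')) < depth (Some (rep v))"
    if v: "v \<in> L" and gv: "g v = Some v'" for v v'
  proof -
    obtain z where z: "succ (rep v) = Some z" "\<rho> z = v'" using gv by (auto simp: g_def)
    have edge: "(Some (rep v), Some z) \<in> T" using succ[OF conjunct1[OF rep[OF v]]] z(1) by simp
    then have "z \<in> V" using T_ext ext_sub by (auto simp: ext_vertices_def)
    then show ?thesis
      using depth[OF edge] rep_min[of v' z] retract_in z by fastforce
  qed
  have g_not_loop: "Some v \<noteq> g v" if "v \<in> L" for v
    using g_decreasing[OF that, of v] by auto
  have e_retract: "(Some v, g v) \<in> ext_edges (G \<inter> L \<times> L) S \<and>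
      ext_weight (G \<inter> L \<times> L) (Some v, g v) \<le> ext_weight G (e v)" if "v \<in> L" for v
    using ext_edge_retract[OF S_L, of "Some (rep v)" "succ (rep v)"] e_image[OF that]
      succ[OF conjunct1[OF rep[OF that]]] T_ext g_not_loop[OF that] by (auto simp: e_def)
  define T' where "T' = (\<lambda>v. (Some v, g v)) ` L"
  have "arborescence_to (ext_vertices L) (ext_edges (G \<inter> L \<times> L) S) None T'"
    unfolding T'_def using e_retract g_decreasing
    by (intro arborescence_to_of_successor[where m = "\<lambda>v. depth (Some (rep v))"]) auto
  moreover have "tree_weight (G \<inter> L \<times> L) T' \<le> tree_weight G T"
    unfolding T'_def
  proof (rule tree_weight_image_le)
    have "finite (ext_vertices V \<times> ext_vertices V)"
      using finite_V by (simp add: ext_vertices_def)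
    then show "finite T" using T_ext ext_sub by (meson finite_subset)
    show "e ` L \<subseteq> T" using succ rep L_subset by (auto simp: e_def)
    show "inj_on e L" by (rule inj_onI) (metis e_def rep prod.inject option.inject)
    show "inj_on (\<lambda>v. (Some v, g v)) L" by (auto simp: inj_on_def)
  qed (use e_retract in blast)
  ultimately show ?thesis by blast
qed

end

section \<open>Unit steps between integers\<close>

definition linked :: "(int \<Rightarrow> bool) \<Rightarrow> int \<Rightarrow> int \<Rightarrow> bool" where
  "linked P a b \<longleftrightarrow> (\<forall>k. min a b \<le> k \<and> k < max a b \<longrightarrow> P k)"

lemma linked_refl [simp]: "linked P a a"
  unfolding linked_def by auto

lemma linked_sym: "linked P a b \<longleftrightarrow> linked P b a"
  unfolding linked_def by (simp add: min.commute max.commute)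

lemma linkedD: "linked P a b \<Longrightarrow> min a b \<le> k \<Longrightarrow> k < max a b \<Longrightarrow> P k"
  unfolding linked_def by blast

lemma linked_trans:
  assumes "linked P a b" "linked P b c"
  shows "linked P a c"
  unfolding linked_def
proof (intro allI impI)
  fix k assume k: "min a c \<le> k \<and> k < max a c"
  show "P k"
  proof (cases "min a b \<le> k \<and> k < max a b")
    case True
    then show ?thesis using linkedD[OF assms(1)] by blast
  next
    case False
    then have "min b c \<le> k \<and> k < max b c" using k by linarith
    then show ?thesis using linkedD[OF assms(2)] by blast
  qed
qed

lemma linked_cong: "linked P a b \<Longrightarrow> linked P a c \<longleftrightarrow> linked P b c"
  using linked_trans linked_sym by blast

lemma linked_between: "linked P a b \<Longrightarrow> min a b \<le> c \<Longrightarrow> c \<le> max a b \<Longrightarrow> linked P a c"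
  unfolding linked_def by (auto simp: min_def max_def split: if_splits)

lemma linked_succ_iff [simp]: "linked P k (k + 1) \<longleftrightarrow> P k"
  unfolding linked_def by auto

lemma linked_extend_up: "linked P a b \<Longrightarrow> P b \<Longrightarrow> linked P a (b + 1)"
  using linked_trans linked_succ_iff by blast

lemma linked_extend_down: "linked P a b \<Longrightarrow> P (b - 1) \<Longrightarrow> linked P a (b - 1)"
  using linked_trans linked_succ_iff linked_sym by (metis diff_add_cancel)

lemma linked_induct [consumes 1, case_names start up down]:
  assumes "linked P a c" and "Q a"
    and up: "\<And>k. P k \<Longrightarrow> Q k \<Longrightarrow> Q (k + 1)" and down: "\<And>k. P k \<Longrightarrow> Q (k + 1) \<Longrightarrow> Q k"
  shows "Q c"
proof (cases "a \<le> c")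
  case True
  have "linked P a c' \<longrightarrow> Q c'" if "a \<le> c'" for c'
    using that
  proof (induction c' rule: int_ge_induct)
    case (step i)
    show ?case
    proof
      assume "linked P a (i + 1)"
      then have "linked P a i" "P i"
        using step.hyps linked_between[of P a "i + 1" i] linkedD[of P a "i + 1" i] by simp_all
      then show "Q (i + 1)" using step.IH up by blast
    qed
  qed (use \<open>Q a\<close> in simp)
  then show ?thesis using True assms(1) by blast
next
  case False
  have "linked P a c' \<longrightarrow> Q c'" if "c' \<le> a" for c'
    using that
  proof (induction c' rule: int_le_induct)
    case (step i)
    show ?case
    proof
      assume "linked P a (i - 1)"
      then have "linked P a i" "P (i - 1)"
        using step.hyps linked_between[of P a "i - 1" i] linkedD[of P a "i - 1" "i - 1"] by simp_all
      then show "Q (i - 1)" using step.IH down[of "i - 1"] by simp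
    qed
  qed (use \<open>Q a\<close> in simp)
  then show ?thesis using False assms(1) by simp
qed

lemma finite_linked:
  assumes "finite {k. P k}"
  shows "finite {c. linked P a c}"
proof (rule finite_subset)
  show "{c. linked P a c} \<subseteq> insert a ({k. P k} \<union> (\<lambda>k. k + 1) ` {k. P k})"
  proof
    fix c assume "c \<in> {c. linked P a c}"
    then have "P c" if "c < a" using linkedD[of P a c c] that by simp
    moreover have "P (c - 1)" if "a < c" using \<open>c \<in> _\<close> linkedD[of P a c "c - 1"] that by simp
    ultimately show "c \<in> insert a ({k. P k} \<union> (\<lambda>k. k + 1) ` {k. P k})"
      by (cases a c rule: linorder_cases) (auto intro: image_eqI[of c _ "c - 1"])
  qed
qed (use assms in simp)

lemma Min_linked_eq_iff:
  assumes "finite {k. P k}"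
  shows "Min {c. linked P a c} = l \<longleftrightarrow> linked P a l \<and> \<not> P (l - 1)"
proof -
  have fin: "finite {c. linked P a c}" using finite_linked[OF assms] .
  have least: "l \<le> c" if "linked P a l" "\<not> P (l - 1)" "linked P a c" for c
    using that linked_trans[OF that(3)[unfolded linked_sym[of P a]] that(1)]
      linkedD[of P c l "l - 1"]
    by (cases "l \<le> c") auto
  show ?thesis
  proof
    assume "Min {c. linked P a c} = l"
    moreover have "Min {c. linked P a c} \<in> {c. linked P a c}" using fin
      by (rule Min_in) (auto intro: linked_refl)
    ultimately have "linked P a l" "\<And>c. linked P a c \<Longrightarrow> l \<le> c" using fin by auto
    then show "linked P a l \<and> \<not> P (l - 1)" using linked_extend_down by fastforce
  qed (use fin least in \<open>auto intro: Min_eqI\<close>)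
qed

lemma Max_linked_eq_iff:
  assumes "finite {k. P k}"
  shows "Max {c. linked P a c} = r \<longleftrightarrow> linked P a r \<and> \<not> P r"
proof -
  have fin: "finite {c. linked P a c}" using finite_linked[OF assms] .
  have greatest: "c \<le> r" if "linked P a r" "\<not> P r" "linked P a c" for c
    using that linked_trans[OF that(1)[unfolded linked_sym[of P a]] that(3)] linkedD[of P r c r]
    by (cases "c \<le> r") auto
  show ?thesis
  proof
    assume "Max {c. linked P a c} = r"
    moreover have "Max {c. linked P a c} \<in> {c. linked P a c}" using fin
      by (rule Max_in) (auto intro: linked_refl)
    ultimately have "linked P a r" "\<And>c. linked P a c \<Longrightarrow> c \<le> r" using fin by auto
    then show "linked P a r \<and> \<not> P r" using linked_extend_up by fastforce
  qed (use fin greatest in \<open>auto intro: Max_eqI\<close>)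
qed

lemma linked_left_end_le: "linked P a l \<Longrightarrow> \<not> P (l - 1) \<Longrightarrow> l \<le> a"
  using linkedD[of P a l "l - 1"] by (cases "l \<le> a") auto

lemma linked_right_end_ge: "linked P a r \<Longrightarrow> \<not> P r \<Longrightarrow> a \<le> r"
  using linkedD[of P a r r] by (cases "a \<le> r") auto

lemma int_interval_first_switch:
  fixes a b :: int
  assumes "a \<le> b" "\<not> P a"
  obtains "\<not> P b" | i where "a < i" "i \<le> b" "\<not> P (i - 1)" "P i"
proof (cases "P b")
  case True
  let ?I = "{i \<in> {a..b}. P i}"
  have fin: "finite ?I" by (rule finite_subset[of _ "{a..b}"]) auto
  have "b \<in> ?I" using True assms(1) by simp
  then have m: "Min ?I \<in> ?I" using fin by (intro Min_in) auto
  then have "a < Min ?I" using assms(2) by (cases "a = Min ?I") auto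
  moreover have "\<not> P (Min ?I - 1)"
    using Min_le[OF fin, of "Min ?I - 1"] m calculation by auto
  ultimately show ?thesis using that(2) m by auto
qed (use that in blast)

lemma The_Min_image:
  fixes A :: "'b :: linorder set"
  assumes "finite A" "A \<noteq> {}" "\<And>c. key (f c) = c"
  shows "(THE q. q \<in> f ` A \<and> (\<forall>q'\<in>f ` A. key q \<le> key q')) = f (Min A)"
proof (rule the_equality)
  show "f (Min A) \<in> f ` A \<and> (\<forall>q'\<in>f ` A. key (f (Min A)) \<le> key q')"
    using assms by auto
  fix q assume "q \<in> f ` A \<and> (\<forall>q'\<in>f ` A. key q \<le> key q')"
  then obtain c where "q = f c" "c \<in> A" "\<forall>c'\<in>A. c \<le> c'" using assms(3) by auto
  then show "q = f (Min A)" using Min_eqI[OF assms(1)] by auto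
qed

lemma The_Max_image:
  fixes A :: "'b :: linorder set"
  assumes "finite A" "A \<noteq> {}" "\<And>c. key (f c) = c"
  shows "(THE q. q \<in> f ` A \<and> (\<forall>q'\<in>f ` A. key q' \<le> key q)) = f (Max A)"
proof (rule the_equality)
  show "f (Max A) \<in> f ` A \<and> (\<forall>q'\<in>f ` A. key q' \<le> key (f (Max A)))"
    using assms by auto
  fix q assume "q \<in> f ` A \<and> (\<forall>q'\<in>f ` A. key q' \<le> key q)"
  then obtain c where "q = f c" "c \<in> A" "\<forall>c'\<in>A. c' \<le> c" using assms(3) by auto
  then show "q = f (Max A)" using Max_eqI[OF assms(1)] by auto
qed

section \<open>Row and column segments\<close>

definition hedge :: "pixel set set \<Rightarrow> int \<Rightarrow> int \<Rightarrow> bool" where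
  "hedge E x y \<longleftrightarrow> {(x, y), (x + 1, y)} \<in> E"

definition vedge :: "pixel set set \<Rightarrow> int \<Rightarrow> int \<Rightarrow> bool" where
  "vedge E x y \<longleftrightarrow> {(x, y), (x, y + 1)} \<in> E"

abbreviation hlinked :: "pixel set set \<Rightarrow> int \<Rightarrow> int \<Rightarrow> int \<Rightarrow> bool" where
  "hlinked E y \<equiv> linked (\<lambda>x. hedge E x y)"

abbreviation vlinked :: "pixel set set \<Rightarrow> int \<Rightarrow> int \<Rightarrow> int \<Rightarrow> bool" where
  "vlinked E x \<equiv> linked (vedge E x)"

declare tilt.simps [simp del]

locale board_with_sinks =
  fixes V :: "pixel set" and E :: "pixel set set" and S :: "pixel set"
  assumes board: "board V E" and sinks_in_V: "S \<subseteq> V"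
begin

lemma finite_V: "finite V"
  using board unfolding board_def by blast

lemma edge_in_V_grid_adj:
  assumes "{p, q} \<in> E"
  shows "p \<in> V" "q \<in> V" "grid_adj p q"
proof -
  obtain p' q' where "{p, q} = {p', q'}" "p' \<in> V" "q' \<in> V" "grid_adj p' q'"
    using assms board unfolding board_def by blast
  then show "p \<in> V" "q \<in> V" "grid_adj p q"
    by (auto simp: doubleton_eq_iff grid_adj_def abs_minus_commute)
qed

lemma hedge_in_V: "hedge E x y \<Longrightarrow> (x, y) \<in> V \<and> (x + 1, y) \<in> V"
  unfolding hedge_def using edge_in_V_grid_adj by blast

lemma vedge_in_V: "vedge E x y \<Longrightarrow> (x, y) \<in> V \<and> (x, y + 1) \<in> V"
  unfolding vedge_def using edge_in_V_grid_adj by blast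

lemma hrel_iff:
  "((a, b), (c, d)) \<in> hrel E \<longleftrightarrow> d = b \<and> (c = a + 1 \<and> hedge E a b \<or> a = c + 1 \<and> hedge E c b)"
proof
  assume "((a, b), (c, d)) \<in> hrel E"
  then have e: "{(a, b), (c, d)} \<in> E" "(a, b) \<noteq> (c, d)" "d = b" unfolding hrel_def by auto
  then have "\<bar>a - c\<bar> = 1" using edge_in_V_grid_adj(3)[OF e(1)] unfolding grid_adj_def by auto
  then have "c = a + 1 \<or> a = c + 1" by auto
  then show "d = b \<and> (c = a + 1 \<and> hedge E a b \<or> a = c + 1 \<and> hedge E c b)"
    using e unfolding hedge_def by (auto simp: insert_commute)
qed (auto simp: hrel_def hedge_def insert_commute)

lemma vrel_iff:
  "((a, b), (c, d)) \<in> vrel E \<longleftrightarrow> c = a \<and> (d = b + 1 \<and> vedge E a b \<or> b = d + 1 \<and> vedge E a d)"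
proof
  assume "((a, b), (c, d)) \<in> vrel E"
  then have e: "{(a, b), (c, d)} \<in> E" "(a, b) \<noteq> (c, d)" "c = a" unfolding vrel_def by auto
  then have "\<bar>b - d\<bar> = 1" using edge_in_V_grid_adj(3)[OF e(1)] unfolding grid_adj_def by auto
  then have "d = b + 1 \<or> b = d + 1" by auto
  then show "c = a \<and> (d = b + 1 \<and> vedge E a b \<or> b = d + 1 \<and> vedge E a d)"
    using e unfolding vedge_def by (auto simp: insert_commute)
qed (auto simp: vrel_def vedge_def insert_commute)

lemma rowseg_iff: "(c, d) \<in> rowseg E (a, b) \<longleftrightarrow> d = b \<and> hlinked E b a c"
proof
  assume "(c, d) \<in> rowseg E (a, b)"
  then have "((a, b), (c, d)) \<in> (hrel E)\<^sup>*" unfolding rowseg_def by simp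
  then have "snd (c, d) = b \<and> hlinked E b a (fst (c, d))"
  proof (induction rule: rtrancl_induct)
    case (step q q')
    then show ?case
      using hrel_iff[of "fst q" "snd q" "fst q'" "snd q'"] linked_extend_up linked_extend_down
      by fastforce
  qed simp
  then show "d = b \<and> hlinked E b a c" by simp
next
  assume "d = b \<and> hlinked E b a c"
  then have "hlinked E b a c" "d = b" by simp_all
  from this(1) have "((a, b), (c, b)) \<in> (hrel E)\<^sup>*"
  proof (induction rule: linked_induct)
    case (up k)
    then show ?case using hrel_iff[of k b "k + 1" b] by (meson rtrancl.rtrancl_into_rtrancl)
  next
    case (down k)
    then show ?case using hrel_iff[of "k + 1" b k b] by (meson rtrancl.rtrancl_into_rtrancl)
  qed simp
  then show "(c, d) \<in> rowseg E (a, b)" unfolding rowseg_def using \<open>d = b\<close> by simp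
qed

lemma colseg_iff: "(c, d) \<in> colseg E (a, b) \<longleftrightarrow> c = a \<and> vlinked E a b d"
proof
  assume "(c, d) \<in> colseg E (a, b)"
  then have "((a, b), (c, d)) \<in> (vrel E)\<^sup>*" unfolding colseg_def by simp
  then have "fst (c, d) = a \<and> vlinked E a b (snd (c, d))"
  proof (induction rule: rtrancl_induct)
    case (step q q')
    then show ?case
      using vrel_iff[of "fst q" "snd q" "fst q'" "snd q'"] linked_extend_up linked_extend_down
      by fastforce
  qed simp
  then show "c = a \<and> vlinked E a b d" by simp
next
  assume "c = a \<and> vlinked E a b d"
  then have "vlinked E a b d" "c = a" by simp_all
  from this(1) have "((a, b), (a, d)) \<in> (vrel E)\<^sup>*"
  proof (induction rule: linked_induct)
    case (up k)
    then show ?case using vrel_iff[of a k a "k + 1"] by (meson rtrancl.rtrancl_into_rtrancl)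
  next
    case (down k)
    then show ?case using vrel_iff[of a "k + 1" a k] by (meson rtrancl.rtrancl_into_rtrancl)
  qed simp
  then show "(c, d) \<in> colseg E (a, b)" unfolding colseg_def using \<open>c = a\<close> by simp
qed

lemma hlinked_in_V: "hlinked E y x x' \<Longrightarrow> (x, y) \<in> V \<Longrightarrow> (x', y) \<in> V"
  by (induction rule: linked_induct) (use hedge_in_V in auto)

lemma vlinked_in_V: "vlinked E x y y' \<Longrightarrow> (x, y) \<in> V \<Longrightarrow> (x, y') \<in> V"
  by (induction rule: linked_induct) (use vedge_in_V in auto)

lemma finite_hedges: "finite {x. hedge E x y}"
proof (rule finite_subset)
  show "{x. hedge E x y} \<subseteq> fst ` V" using hedge_in_V by force
qed (use finite_V in simp)

lemma finite_vedges: "finite {y. vedge E x y}"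
proof (rule finite_subset)
  show "{y. vedge E x y} \<subseteq> snd ` V" using vedge_in_V by force
qed (use finite_V in simp)

lemma rowseg_eq: "rowseg E (a, b) = (\<lambda>c. (c, b)) ` {c. hlinked E b a c}"
proof (rule set_eqI)
  fix q show "q \<in> rowseg E (a, b) \<longleftrightarrow> q \<in> (\<lambda>c. (c, b)) ` {c. hlinked E b a c}"
    by (cases q) (auto simp: rowseg_iff)
qed

lemma colseg_eq: "colseg E (a, b) = (\<lambda>d. (a, d)) ` {d. vlinked E a b d}"
proof (rule set_eqI)
  fix q show "q \<in> colseg E (a, b) \<longleftrightarrow> q \<in> (\<lambda>d. (a, d)) ` {d. vlinked E a b d}"
    by (cases q) (auto simp: colseg_iff)
qed

lemma tilt_L: "tilt E L (a, b) = (Min {c. hlinked E b a c}, b)"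
  unfolding tilt.simps rowseg_eq
  by (rule The_Min_image) (auto intro: finite_linked finite_hedges exI[of _ a])

lemma tilt_R: "tilt E R (a, b) = (Max {c. hlinked E b a c}, b)"
  unfolding tilt.simps rowseg_eq
  by (rule The_Max_image) (auto intro: finite_linked finite_hedges exI[of _ a])

lemma tilt_U: "tilt E U (a, b) = (a, Max {d. vlinked E a b d})"
  unfolding tilt.simps colseg_eq
  by (rule The_Max_image) (auto intro: finite_linked finite_vedges exI[of _ b])

lemma tilt_D: "tilt E D (a, b) = (a, Min {d. vlinked E a b d})"
  unfolding tilt.simps colseg_eq
  by (rule The_Min_image) (auto intro: finite_linked finite_vedges exI[of _ b])

lemma tilt_L_iff: "tilt E L (a, b) = (l, b') \<longleftrightarrow> b' = b \<and> hlinked E b a l \<and> \<not> hedge E (l - 1) b"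
  unfolding tilt_L by (auto simp: Min_linked_eq_iff[OF finite_hedges])

lemma tilt_R_iff: "tilt E R (a, b) = (r, b') \<longleftrightarrow> b' = b \<and> hlinked E b a r \<and> \<not> hedge E r b"
  unfolding tilt_R by (auto simp: Max_linked_eq_iff[OF finite_hedges])

lemma tilt_U_iff: "tilt E U (a, b) = (a', u) \<longleftrightarrow> a' = a \<and> vlinked E a b u \<and> \<not> vedge E a u"
  unfolding tilt_U by (auto simp: Max_linked_eq_iff[OF finite_vedges])

lemma tilt_D_iff: "tilt E D (a, b) = (a', l) \<longleftrightarrow> a' = a \<and> vlinked E a b l \<and> \<not> vedge E a (l - 1)"
  unfolding tilt_D by (auto simp: Min_linked_eq_iff[OF finite_vedges])

lemma tilt_L_end:
  obtains l where "tilt E L (a, b) = (l, b)" "hlinked E b a l" "\<not> hedge E (l - 1) b" "l \<le> a"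
  using tilt_L tilt_L_iff linked_left_end_le by metis

lemma tilt_R_end:
  obtains r where "tilt E R (a, b) = (r, b)" "hlinked E b a r" "\<not> hedge E r b" "a \<le> r"
  using tilt_R tilt_R_iff linked_right_end_ge by metis

lemma tilt_U_end:
  obtains u where "tilt E U (a, b) = (a, u)" "vlinked E a b u" "\<not> vedge E a u" "b \<le> u"
  using tilt_U tilt_U_iff linked_right_end_ge by metis

lemma tilt_D_end:
  obtains l where "tilt E D (a, b) = (a, l)" "vlinked E a b l" "\<not> vedge E a (l - 1)" "l \<le> b"
  using tilt_D tilt_D_iff linked_left_end_le by metis

lemma tilt_in_V:
  assumes "p \<in> V"
  shows "tilt E d p \<in> V"
proof -
  obtain a b where p: "p = (a, b)" by fastforce
  show ?thesis
  proof (cases d)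
    case L
    obtain l where "tilt E L (a, b) = (l, b)" "hlinked E b a l" by (rule tilt_L_end)
    then show ?thesis using L hlinked_in_V assms p by auto
  next
    case R
    obtain r where "tilt E R (a, b) = (r, b)" "hlinked E b a r" by (rule tilt_R_end)
    then show ?thesis using R hlinked_in_V assms p by auto
  next
    case U
    obtain u where "tilt E U (a, b) = (a, u)" "vlinked E a b u" by (rule tilt_U_end)
    then show ?thesis using U vlinked_in_V assms p by auto
  next
    case D
    obtain l where "tilt E D (a, b) = (a, l)" "vlinked E a b l" by (rule tilt_D_end)
    then show ?thesis using D vlinked_in_V assms p by auto
  qed
qed

lemma full_tilt_edges_subset: "full_tilt_edges V E \<subseteq> V \<times> V"
  unfolding full_tilt_edges_def using tilt_in_V by auto

end

section \<open>Segments meeting the base\<close>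

context board_with_sinks
begin

lemma reflex_corner_lower_left:
  assumes "(a, b) \<in> V" "hedge E (a - 1) b" "vedge E a (b - 1)"
    "(a - 1, b) \<in> V \<and> \<not> vedge E (a - 1) (b - 1) \<or> (a, b - 1) \<in> V \<and> \<not> hedge E (a - 1) (b - 1)"
  shows "reflex_corner V E (a, b)"
  unfolding reflex_corner_def
proof (rule bexI[of _ "(a, b)"])
  show "(a, b) \<in> incident (a, b)" by (simp add: incident_def)
qed (use assms in \<open>auto simp: hx_def vy_def boundary_side_def hedge_def vedge_def insert_commute\<close>)

lemma reflex_corner_lower_right:
  assumes "(a, b) \<in> V" "hedge E a b" "vedge E a (b - 1)"
    "(a + 1, b) \<in> V \<and> \<not> vedge E (a + 1) (b - 1) \<or> (a, b - 1) \<in> V \<and> \<not> hedge E a (b - 1)"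
  shows "reflex_corner V E (a + 1, b)"
  unfolding reflex_corner_def
proof (rule bexI[of _ "(a, b)"])
  show "(a, b) \<in> incident (a + 1, b)" by (simp add: incident_def)
qed (use assms in \<open>auto simp: hx_def vy_def boundary_side_def hedge_def vedge_def insert_commute\<close>)

lemma reflex_corner_upper_left:
  assumes "(a, b) \<in> V" "hedge E (a - 1) b" "vedge E a b"
    "(a - 1, b) \<in> V \<and> \<not> vedge E (a - 1) b \<or> (a, b + 1) \<in> V \<and> \<not> hedge E (a - 1) (b + 1)"
  shows "reflex_corner V E (a, b + 1)"
  unfolding reflex_corner_def
proof (rule bexI[of _ "(a, b)"])
  show "(a, b) \<in> incident (a, b + 1)" by (simp add: incident_def)
qed (use assms in \<open>auto simp: hx_def vy_def boundary_side_def hedge_def vedge_def insert_commute\<close>)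

lemma reflex_corner_upper_right:
  assumes "(a, b) \<in> V" "hedge E a b" "vedge E a b"
    "(a + 1, b) \<in> V \<and> \<not> vedge E (a + 1) b \<or> (a, b + 1) \<in> V \<and> \<not> hedge E a (b + 1)"
  shows "reflex_corner V E (a + 1, b + 1)"
  unfolding reflex_corner_def
proof (rule bexI[of _ "(a, b)"])
  show "(a, b) \<in> incident (a + 1, b + 1)" by (simp add: incident_def)
qed (use assms in \<open>auto simp: hx_def vy_def boundary_side_def hedge_def vedge_def insert_commute\<close>)

lemma large_base_subset: "large_base V E S \<subseteq> V"
proof
  fix q assume "q \<in> large_base V E S"
  then consider (corner) c where "corner_pixel V E c" "(c, q) \<in> (full_tilt_edges V E)\<^sup>*"
    | (sink) "q \<in> S" | (sink_tilt) s d where "s \<in> S" "q = tilt E d s"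
    | (reflex) c p d where "p \<in> incident c" "p \<in> V" "q = tilt E d p"
    unfolding large_base_def by blast
  then show "q \<in> V"
  proof cases
    case corner
    have "c \<in> V" using corner(1) unfolding corner_pixel_def by blast
    with corner(2) show ?thesis
      by (induction rule: rtrancl_induct) (use full_tilt_edges_subset in auto)
  qed (use sinks_in_V tilt_in_V in auto)
qed

lemma sinks_in_large_base: "S \<subseteq> large_base V E S"
  unfolding large_base_def by blast

lemma corner_in_large_base: "corner_pixel V E c \<Longrightarrow> c \<in> large_base V E S"
  unfolding large_base_def by blast

lemma reflex_tilt_in_large_base:
  "reflex_corner V E c \<Longrightarrow> p \<in> V \<Longrightarrow> p \<in> incident c \<Longrightarrow> tilt E d p \<in> large_base V E S"
  unfolding large_base_def by blast

definition col_meets_base :: "int \<Rightarrow> int \<Rightarrow> bool" where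
  "col_meets_base x y \<longleftrightarrow> (\<exists>d. (x, d) \<in> large_base V E S \<and> vlinked E x y d)"

definition row_meets_base :: "int \<Rightarrow> int \<Rightarrow> bool" where
  "row_meets_base x y \<longleftrightarrow> (\<exists>c. (c, y) \<in> large_base V E S \<and> hlinked E y x c)"

lemma col_meets_base_cong: "vlinked E x y y' \<Longrightarrow> col_meets_base x y' \<longleftrightarrow> col_meets_base x y"
  unfolding col_meets_base_def by (meson linked_sym linked_trans)

lemma row_meets_base_cong: "hlinked E y x x' \<Longrightarrow> row_meets_base x' y \<longleftrightarrow> row_meets_base x y"
  unfolding row_meets_base_def by (meson linked_sym linked_trans)

lemma col_meets_base_if_tilt_U: "tilt E U (x, y) \<in> large_base V E S \<Longrightarrow> col_meets_base x y"
  by (rule tilt_U_end[of x y]) (auto simp: col_meets_base_def)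

lemma row_meets_base_if_tilt_R: "tilt E R (x, y) \<in> large_base V E S \<Longrightarrow> row_meets_base x y"
  by (rule tilt_R_end[of x y]) (auto simp: row_meets_base_def)

lemma large_vertices_iff: "(x, y) \<in> large_vertices V E S \<longleftrightarrow> row_meets_base x y \<and> col_meets_base x y"
proof
  assume "(x, y) \<in> large_vertices V E S"
  then consider "(x, y) \<in> large_base V E S"
    | p q where "p \<in> large_base V E S" "q \<in> large_base V E S"
        "(x, y) \<in> rowseg E p" "(x, y) \<in> colseg E q"
    unfolding large_vertices_def by blast
  then show "row_meets_base x y \<and> col_meets_base x y"
  proof cases
    case 1
    then show ?thesis unfolding row_meets_base_def col_meets_base_def by auto
  next
    case 2
    then show ?thesis unfolding row_meets_base_def col_meets_base_def
      by (cases p, cases q) (auto simp: rowseg_iff colseg_iff linked_sym)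
  qed
next
  assume "row_meets_base x y \<and> col_meets_base x y"
  then obtain c d where "(c, y) \<in> large_base V E S" "hlinked E y x c"
    "(x, d) \<in> large_base V E S" "vlinked E x y d"
    unfolding row_meets_base_def col_meets_base_def by blast
  moreover have "(x, y) \<in> rowseg E (c, y)" "(x, y) \<in> colseg E (x, d)"
    using calculation by (auto simp: rowseg_iff colseg_iff linked_sym)
  ultimately show "(x, y) \<in> large_vertices V E S"
    unfolding large_vertices_def by blast
qed

lemma large_vertices_subset: "large_vertices V E S \<subseteq> V"
proof
  fix p assume p: "p \<in> large_vertices V E S"
  obtain x y where xy: "p = (x, y)" by fastforce
  then obtain c where "(c, y) \<in> large_base V E S" "hlinked E y x c"
    using p large_vertices_iff unfolding row_meets_base_def by blast
  then show "p \<in> V" using hlinked_in_V[of y c x] linked_sym large_base_subset xy by blast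
qed

lemma col_meets_base_if_no_left_edge:
  assumes xy: "(x, y) \<in> V" and no_left: "\<not> hedge E (x - 1) y"
  shows "col_meets_base x y"
proof -
  obtain u where u: "tilt E U (x, y) = (x, u)" "vlinked E x y u" "\<not> vedge E x u" "y \<le> u"
    by (rule tilt_U_end)
  from \<open>y \<le> u\<close> no_left show ?thesis
  proof (cases rule: int_interval_first_switch[where P = "\<lambda>i. hedge E (x - 1) i"])
    case 1
    have "tilt E L (x, u) = (x, u)" "tilt E U (x, u) = (x, u)"
      using 1 u(3) by (simp_all add: tilt_L_iff tilt_U_iff)
    then have "(x, u) \<in> large_base V E S"
      using vlinked_in_V[OF u(2) xy] by (intro corner_in_large_base) (auto simp: corner_pixel_def)
    then show ?thesis using u(2) unfolding col_meets_base_def by blast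
  next
    case (2 i)
    have "vlinked E x y (i - 1)" "vlinked E x y i" "vedge E x (i - 1)"
      using 2 u(2) linked_between[of _ y u] linkedD[of _ y u "i - 1"] by auto
    then have "reflex_corner V E (x, i)"
      using 2 vlinked_in_V xy by (intro reflex_corner_lower_left) auto
    then have "tilt E U (x, i - 1) \<in> large_base V E S"
      using vlinked_in_V[OF \<open>vlinked E x y (i - 1)\<close> xy]
      by (rule reflex_tilt_in_large_base) (simp add: incident_def)
    then show ?thesis
      using col_meets_base_if_tilt_U col_meets_base_cong[OF \<open>vlinked E x y (i - 1)\<close>] by blast
  qed
qed

lemma col_meets_base_if_no_right_edge:
  assumes xy: "(x, y) \<in> V" and no_right: "\<not> hedge E x y"
  shows "col_meets_base x y"
proof -
  obtain u where u: "tilt E U (x, y) = (x, u)" "vlinked E x y u" "\<not> vedge E x u" "y \<le> u"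
    by (rule tilt_U_end)
  from \<open>y \<le> u\<close> no_right show ?thesis
  proof (cases rule: int_interval_first_switch[where P = "\<lambda>i. hedge E x i"])
    case 1
    have "tilt E R (x, u) = (x, u)" "tilt E U (x, u) = (x, u)"
      using 1 u(3) by (simp_all add: tilt_R_iff tilt_U_iff)
    then have "(x, u) \<in> large_base V E S"
      using vlinked_in_V[OF u(2) xy] by (intro corner_in_large_base) (auto simp: corner_pixel_def)
    then show ?thesis using u(2) unfolding col_meets_base_def by blast
  next
    case (2 i)
    have "vlinked E x y (i - 1)" "vlinked E x y i" "vedge E x (i - 1)"
      using 2 u(2) linked_between[of _ y u] linkedD[of _ y u "i - 1"] by auto
    then have "reflex_corner V E (x + 1, i)"
      using 2 vlinked_in_V xy by (intro reflex_corner_lower_right) auto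
    then have "tilt E U (x, i - 1) \<in> large_base V E S"
      using vlinked_in_V[OF \<open>vlinked E x y (i - 1)\<close> xy]
      by (rule reflex_tilt_in_large_base) (simp add: incident_def)
    then show ?thesis
      using col_meets_base_if_tilt_U col_meets_base_cong[OF \<open>vlinked E x y (i - 1)\<close>] by blast
  qed
qed

lemma row_meets_base_if_no_lower_edge:
  assumes xy: "(x, y) \<in> V" and no_lower: "\<not> vedge E x (y - 1)"
  shows "row_meets_base x y"
proof -
  obtain r where r: "tilt E R (x, y) = (r, y)" "hlinked E y x r" "\<not> hedge E r y" "x \<le> r"
    by (rule tilt_R_end)
  from \<open>x \<le> r\<close> no_lower show ?thesis
  proof (cases rule: int_interval_first_switch[where P = "\<lambda>i. vedge E i (y - 1)"])
    case 1
    have "tilt E R (r, y) = (r, y)" "tilt E D (r, y) = (r, y)"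
      using 1 r(3) by (simp_all add: tilt_R_iff tilt_D_iff)
    then have "(r, y) \<in> large_base V E S"
      using hlinked_in_V[OF r(2) xy] by (intro corner_in_large_base) (auto simp: corner_pixel_def)
    then show ?thesis using r(2) unfolding row_meets_base_def by blast
  next
    case (2 i)
    have "hlinked E y x (i - 1)" "hlinked E y x i" "hedge E (i - 1) y"
      using 2 r(2) linked_between[of _ x r] linkedD[of _ x r "i - 1"] by auto
    then have "reflex_corner V E (i, y)"
      using 2 hlinked_in_V xy by (intro reflex_corner_lower_left) auto
    then have "tilt E R (i - 1, y) \<in> large_base V E S"
      using hlinked_in_V[OF \<open>hlinked E y x (i - 1)\<close> xy]
      by (rule reflex_tilt_in_large_base) (simp add: incident_def)
    then show ?thesis
      using row_meets_base_if_tilt_R row_meets_base_cong[OF \<open>hlinked E y x (i - 1)\<close>] by blast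
  qed
qed

lemma row_meets_base_if_no_upper_edge:
  assumes xy: "(x, y) \<in> V" and no_upper: "\<not> vedge E x y"
  shows "row_meets_base x y"
proof -
  obtain r where r: "tilt E R (x, y) = (r, y)" "hlinked E y x r" "\<not> hedge E r y" "x \<le> r"
    by (rule tilt_R_end)
  from \<open>x \<le> r\<close> no_upper show ?thesis
  proof (cases rule: int_interval_first_switch[where P = "\<lambda>i. vedge E i y"])
    case 1
    have "tilt E R (r, y) = (r, y)" "tilt E U (r, y) = (r, y)"
      using 1 r(3) by (simp_all add: tilt_R_iff tilt_U_iff)
    then have "(r, y) \<in> large_base V E S"
      using hlinked_in_V[OF r(2) xy] by (intro corner_in_large_base) (auto simp: corner_pixel_def)
    then show ?thesis using r(2) unfolding row_meets_base_def by blast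
  next
    case (2 i)
    have "hlinked E y x (i - 1)" "hlinked E y x i" "hedge E (i - 1) y"
      using 2 r(2) linked_between[of _ x r] linkedD[of _ x r "i - 1"] by auto
    then have "reflex_corner V E (i, y + 1)"
      using 2 hlinked_in_V xy by (intro reflex_corner_upper_left) auto
    then have "tilt E R (i - 1, y) \<in> large_base V E S"
      using hlinked_in_V[OF \<open>hlinked E y x (i - 1)\<close> xy]
      by (rule reflex_tilt_in_large_base) (simp add: incident_def)
    then show ?thesis
      using row_meets_base_if_tilt_R row_meets_base_cong[OF \<open>hlinked E y x (i - 1)\<close>] by blast
  qed
qed

lemma column_left_vedges:
  assumes xy: "(x, y) \<in> V" and no_base: "\<not> col_meets_base x y" and y': "vlinked E x y y'"
  shows "vedge E (x - 1) y' \<longleftrightarrow> vedge E x y'"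
    and "vedge E (x - 1) (y' - 1) \<Longrightarrow> vedge E x (y' - 1)"
proof -
  have in_V: "(x, y') \<in> V" and no_base': "\<not> col_meets_base x y'"
    using vlinked_in_V[OF y' xy] col_meets_base_cong[OF y'] no_base by auto
  have left: "hedge E (x - 1) y'" and left_V: "(x - 1, y') \<in> V"
    using col_meets_base_if_no_left_edge in_V no_base' hedge_in_V by fastforce+
  have no_reflex: False if "reflex_corner V E c" "(x, y') \<in> incident c" for c
  proof -
    have "tilt E U (x, y') \<in> large_base V E S"
      using that(1) in_V that(2) by (rule reflex_tilt_in_large_base)
    then show False using col_meets_base_if_tilt_U no_base' by blast
  qed
  show "vedge E (x - 1) y' \<longleftrightarrow> vedge E x y'"
  proof
    assume "vedge E (x - 1) y'"
    show "vedge E x y'"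
    proof (rule ccontr)
      assume "\<not> vedge E x y'"
      then have "reflex_corner V E (x - 1 + 1, y' + 1)"
        using reflex_corner_upper_right[of "x - 1" y'] in_V left left_V \<open>vedge E (x - 1) y'\<close> by simp
      then show False by (rule no_reflex) (simp add: incident_def)
    qed
  next
    assume "vedge E x y'"
    show "vedge E (x - 1) y'"
    proof (rule ccontr)
      assume "\<not> vedge E (x - 1) y'"
      then have "reflex_corner V E (x, y' + 1)"
        using reflex_corner_upper_left[of x y'] in_V left left_V \<open>vedge E x y'\<close> by simp
      then show False by (rule no_reflex) (simp add: incident_def)
    qed
  qed
  show "vedge E x (y' - 1)" if "vedge E (x - 1) (y' - 1)"
  proof (rule ccontr)
    assume "\<not> vedge E x (y' - 1)"
    then have "reflex_corner V E (x - 1 + 1, y')"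
      using reflex_corner_lower_right[of "x - 1" y'] in_V left left_V that by simp
    then show False by (rule no_reflex) (simp add: incident_def)
  qed
qed

lemma row_below_hedges:
  assumes xy: "(x, y) \<in> V" and no_base: "\<not> row_meets_base x y" and x': "hlinked E y x x'"
  shows "hedge E x' (y - 1) \<longleftrightarrow> hedge E x' y"
    and "hedge E (x' - 1) (y - 1) \<Longrightarrow> hedge E (x' - 1) y"
proof -
  have in_V: "(x', y) \<in> V" and no_base': "\<not> row_meets_base x' y"
    using hlinked_in_V[OF x' xy] row_meets_base_cong[OF x'] no_base by auto
  have lower: "vedge E x' (y - 1)" and lower_V: "(x', y - 1) \<in> V"
    using row_meets_base_if_no_lower_edge in_V no_base' vedge_in_V by fastforce+
  have no_reflex: False if "reflex_corner V E c" "(x', y) \<in> incident c" for c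
  proof -
    have "tilt E R (x', y) \<in> large_base V E S"
      using that(1) in_V that(2) by (rule reflex_tilt_in_large_base)
    then show False using row_meets_base_if_tilt_R no_base' by blast
  qed
  show "hedge E x' (y - 1) \<longleftrightarrow> hedge E x' y"
  proof
    assume "hedge E x' (y - 1)"
    show "hedge E x' y"
    proof (rule ccontr)
      assume "\<not> hedge E x' y"
      then have "reflex_corner V E (x' + 1, y - 1 + 1)"
        using reflex_corner_upper_right[of x' "y - 1"] in_V lower lower_V \<open>hedge E x' (y - 1)\<close>
        by simp
      then show False by (rule no_reflex) (simp add: incident_def)
    qed
  next
    assume "hedge E x' y"
    show "hedge E x' (y - 1)"
    proof (rule ccontr)
      assume "\<not> hedge E x' (y - 1)"
      then have "reflex_corner V E (x' + 1, y)"
        using reflex_corner_lower_right[of x' y] in_V lower lower_V \<open>hedge E x' y\<close> by simp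
      then show False by (rule no_reflex) (simp add: incident_def)
    qed
  qed
  show "hedge E (x' - 1) y" if "hedge E (x' - 1) (y - 1)"
  proof (rule ccontr)
    assume "\<not> hedge E (x' - 1) y"
    then have "reflex_corner V E (x', y - 1 + 1)"
      using reflex_corner_upper_left[of x' "y - 1"] in_V lower lower_V that by simp
    then show False by (rule no_reflex) (simp add: incident_def)
  qed
qed

lemma vlinked_left_iff:
  assumes xy: "(x, y) \<in> V" and no_base: "\<not> col_meets_base x y"
  shows "vlinked E (x - 1) y y' \<longleftrightarrow> vlinked E x y y'"
proof
  assume "vlinked E (x - 1) y y'"
  then show "vlinked E x y y'"
  proof (induction rule: linked_induct)
    case (up k)
    then show ?case using column_left_vedges(1)[OF xy no_base] linked_extend_up by blast
  next
    case (down k)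
    then show ?case
      using column_left_vedges(2)[OF xy no_base, of "k + 1"] linked_extend_down[of _ y "k + 1"]
      by simp
  qed simp
next
  assume y': "vlinked E x y y'"
  show "vlinked E (x - 1) y y'"
    unfolding linked_def
  proof (intro allI impI)
    fix k assume "min y y' \<le> k \<and> k < max y y'"
    then show "vedge E (x - 1) k"
      using column_left_vedges(1)[OF xy no_base] linkedD[OF y'] linked_between[OF y', of k] by simp
  qed
qed

lemma hlinked_lower_iff:
  assumes xy: "(x, y) \<in> V" and no_base: "\<not> row_meets_base x y"
  shows "hlinked E (y - 1) x x' \<longleftrightarrow> hlinked E y x x'"
proof
  assume "hlinked E (y - 1) x x'"
  then show "hlinked E y x x'"
  proof (induction rule: linked_induct)
    case (up k)
    then show ?case using row_below_hedges(1)[OF xy no_base] linked_extend_up by blast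
  next
    case (down k)
    then show ?case
      using row_below_hedges(2)[OF xy no_base, of "k + 1"] linked_extend_down[of _ x "k + 1"]
      by simp
  qed simp
next
  assume x': "hlinked E y x x'"
  show "hlinked E (y - 1) x x'"
    unfolding linked_def
  proof (intro allI impI)
    fix k assume "min x x' \<le> k \<and> k < max x x'"
    then show "hedge E k (y - 1)"
      using row_below_hedges(1)[OF xy no_base] linkedD[OF x'] linked_between[OF x', of k] by simp
  qed
qed

end

section \<open>The retraction onto the large vertices\<close>

context board_with_sinks
begin

definition retract_x :: "int \<Rightarrow> int \<Rightarrow> int" where
  "retract_x x y = Max {x'. x' \<le> x \<and> hlinked E y x x' \<and> col_meets_base x' y}"

definition retract_y :: "int \<Rightarrow> int \<Rightarrow> int" where
  "retract_y x y = Max {y'. y' \<le> y \<and> vlinked E x y y' \<and> row_meets_base x y'}"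

lemma retract_x_eqI:
  assumes "X \<le> x" "hlinked E y x X" "col_meets_base X y"
    and "\<And>x'. X < x' \<Longrightarrow> x' \<le> x \<Longrightarrow> \<not> col_meets_base x' y"
  shows "retract_x x y = X"
  unfolding retract_x_def
proof (rule Max_eqI)
  show "finite {x'. x' \<le> x \<and> hlinked E y x x' \<and> col_meets_base x' y}"
    by (rule finite_subset[OF _ finite_linked[OF finite_hedges]]) auto
qed (use assms in \<open>auto simp: not_le[symmetric]\<close>)

lemma retract_y_eqI:
  assumes "Y \<le> y" "vlinked E x y Y" "row_meets_base x Y"
    and "\<And>y'. Y < y' \<Longrightarrow> y' \<le> y \<Longrightarrow> \<not> row_meets_base x y'"
  shows "retract_y x y = Y"
  unfolding retract_y_def
proof (rule Max_eqI)
  show "finite {y'. y' \<le> y \<and> vlinked E x y y' \<and> row_meets_base x y'}"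
    by (rule finite_subset[OF _ finite_linked[OF finite_vedges]]) auto
qed (use assms in \<open>auto simp: not_le[symmetric]\<close>)

lemma retract_x_spec:
  assumes xy: "(x, y) \<in> V"
  shows "retract_x x y \<le> x" "hlinked E y x (retract_x x y)" "col_meets_base (retract_x x y) y"
    and "\<And>x'. retract_x x y < x' \<Longrightarrow> x' \<le> x \<Longrightarrow> \<not> col_meets_base x' y"
proof -
  let ?X = "{x'. x' \<le> x \<and> hlinked E y x x' \<and> col_meets_base x' y}"
  have fin: "finite ?X"
    by (rule finite_subset[OF _ finite_linked[OF finite_hedges]]) auto
  obtain l where l: "hlinked E y x l" "\<not> hedge E (l - 1) y" "l \<le> x"
    by (rule tilt_L_end)
  then have "l \<in> ?X"
    using col_meets_base_if_no_left_edge[OF hlinked_in_V[OF l(1) xy]] by simp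
  then have "retract_x x y \<in> ?X" unfolding retract_x_def using fin by (intro Max_in) auto
  then show "retract_x x y \<le> x" "hlinked E y x (retract_x x y)" "col_meets_base (retract_x x y) y"
    by simp_all
  show "\<not> col_meets_base x' y" if "retract_x x y < x'" "x' \<le> x" for x'
  proof
    assume "col_meets_base x' y"
    moreover have "hlinked E y x x'"
      using linked_between[OF \<open>hlinked E y x (retract_x x y)\<close>] that by simp
    ultimately have "x' \<le> retract_x x y" unfolding retract_x_def using fin that(2)
      by (intro Max_ge) auto
    then show False using that(1) by simp
  qed
qed

lemma retract_y_spec:
  assumes xy: "(x, y) \<in> V"
  shows "retract_y x y \<le> y" "vlinked E x y (retract_y x y)" "row_meets_base x (retract_y x y)"
    and "\<And>y'. retract_y x y < y' \<Longrightarrow> y' \<le> y \<Longrightarrow> \<not> row_meets_base x y'"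
proof -
  let ?Y = "{y'. y' \<le> y \<and> vlinked E x y y' \<and> row_meets_base x y'}"
  have fin: "finite ?Y"
    by (rule finite_subset[OF _ finite_linked[OF finite_vedges]]) auto
  obtain l where l: "vlinked E x y l" "\<not> vedge E x (l - 1)" "l \<le> y"
    by (rule tilt_D_end)
  then have "l \<in> ?Y"
    using row_meets_base_if_no_lower_edge[OF vlinked_in_V[OF l(1) xy]] by simp
  then have "retract_y x y \<in> ?Y" unfolding retract_y_def using fin by (intro Max_in) auto
  then show "retract_y x y \<le> y" "vlinked E x y (retract_y x y)" "row_meets_base x (retract_y x y)"
    by simp_all
  show "\<not> row_meets_base x y'" if "retract_y x y < y'" "y' \<le> y" for y'
  proof
    assume "row_meets_base x y'"
    moreover have "vlinked E x y y'"
      using linked_between[OF \<open>vlinked E x y (retract_y x y)\<close>] that by simp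
    ultimately have "y' \<le> retract_y x y" unfolding retract_y_def using fin that(2)
      by (intro Max_ge) auto
    then show False using that(1) by simp
  qed
qed

lemma retract_x_column_span:
  assumes xy: "(x, y) \<in> V" and "retract_x x y \<le> x'" "x' \<le> x"
  shows "vlinked E x' y y' \<longleftrightarrow> vlinked E x y y'"
proof -
  have "retract_x x y \<le> i \<longrightarrow> (vlinked E i y y' \<longleftrightarrow> vlinked E x y y')" if "i \<le> x" for i
    using that
  proof (induction i rule: int_le_induct)
    case (step i)
    show ?case
    proof
      assume i: "retract_x x y \<le> i - 1"
      have "hlinked E y x i" using linked_between[OF retract_x_spec(2)[OF xy]] i step.hyps by simp
      then have "(i, y) \<in> V" using hlinked_in_V xy by blast
      moreover have "\<not> col_meets_base i y" using retract_x_spec(4)[OF xy] i step.hyps by simp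
      ultimately show "vlinked E (i - 1) y y' \<longleftrightarrow> vlinked E x y y'"
        using vlinked_left_iff step.IH i by simp
    qed
  qed simp
  then show ?thesis using assms by blast
qed

lemma retract_y_row_span:
  assumes xy: "(x, y) \<in> V" and "retract_y x y \<le> y'" "y' \<le> y"
  shows "hlinked E y' x x' \<longleftrightarrow> hlinked E y x x'"
proof -
  have "retract_y x y \<le> i \<longrightarrow> (hlinked E i x x' \<longleftrightarrow> hlinked E y x x')" if "i \<le> y" for i
    using that
  proof (induction i rule: int_le_induct)
    case (step i)
    show ?case
    proof
      assume i: "retract_y x y \<le> i - 1"
      have "vlinked E x y i" using linked_between[OF retract_y_spec(2)[OF xy]] i step.hyps by simp
      then have "(x, i) \<in> V" using vlinked_in_V xy by blast
      moreover have "\<not> row_meets_base x i" using retract_y_spec(4)[OF xy] i step.hyps by simp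
      ultimately show "hlinked E (i - 1) x x' \<longleftrightarrow> hlinked E y x x'"
        using hlinked_lower_iff step.IH i by simp
    qed
  qed simp
  then show ?thesis using assms by blast
qed

lemma retract_x_eq:
  assumes "(x, y) \<in> V" "col_meets_base x y"
  shows "retract_x x y = x"
  using retract_x_spec(1)[OF assms(1)] retract_x_spec(4)[OF assms(1), of x] assms(2) by fastforce

lemma retract_y_eq:
  assumes "(x, y) \<in> V" "row_meets_base x y"
  shows "retract_y x y = y"
  using retract_y_spec(1)[OF assms(1)] retract_y_spec(4)[OF assms(1), of y] assms(2) by fastforce

lemma retract_x_column:
  assumes xy: "(x, y) \<in> V" and y': "vlinked E x y y'"
  shows "retract_x x y' = retract_x x y"
proof (rule retract_x_eqI)
  let ?X = "retract_x x y"
  have span: "vlinked E x' y y'" if "?X \<le> x'" "x' \<le> x" for x'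
    using retract_x_column_span[OF xy that] y' by simp
  have no_base: "\<not> col_meets_base x' y'" if "?X < x'" "x' \<le> x" for x'
    using retract_x_spec(4)[OF xy that] col_meets_base_cong[OF span] that by simp
  show "?X \<le> x" using retract_x_spec(1)[OF xy] .
  show "col_meets_base ?X y'"
    using retract_x_spec(1,3)[OF xy] col_meets_base_cong[OF span] by simp
  show "\<And>x'. ?X < x' \<Longrightarrow> x' \<le> x \<Longrightarrow> \<not> col_meets_base x' y'" by (rule no_base)
  show "hlinked E y' x ?X"
    unfolding linked_def
  proof (intro allI impI)
    fix k assume "min x ?X \<le> k \<and> k < max x ?X"
    then have k: "?X < k + 1" "k + 1 \<le> x" using retract_x_spec(1)[OF xy] by auto
    have "hlinked E y x (k + 1)" using linked_between[OF retract_x_spec(2)[OF xy]] k by simp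
    then have "(k + 1, y) \<in> V" using hlinked_in_V xy by blast
    moreover have "vlinked E (k + 1) y y'" using span k by simp
    ultimately have "(k + 1, y') \<in> V" using vlinked_in_V by blast
    then show "hedge E k y'" using col_meets_base_if_no_left_edge[of "k + 1" y'] no_base[OF k]
      by auto
  qed
qed

lemma retract_y_row:
  assumes xy: "(x, y) \<in> V" and x': "hlinked E y x x'"
  shows "retract_y x' y = retract_y x y"
proof (rule retract_y_eqI)
  let ?Y = "retract_y x y"
  have span: "hlinked E y' x x'" if "?Y \<le> y'" "y' \<le> y" for y'
    using retract_y_row_span[OF xy that] x' by simp
  have no_base: "\<not> row_meets_base x' y'" if "?Y < y'" "y' \<le> y" for y'
    using retract_y_spec(4)[OF xy that] row_meets_base_cong[OF span] that by simp
  show "?Y \<le> y" using retract_y_spec(1)[OF xy] .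
  show "row_meets_base x' ?Y"
    using retract_y_spec(1,3)[OF xy] row_meets_base_cong[OF span] by simp
  show "\<And>y'. ?Y < y' \<Longrightarrow> y' \<le> y \<Longrightarrow> \<not> row_meets_base x' y'" by (rule no_base)
  show "vlinked E x' y ?Y"
    unfolding linked_def
  proof (intro allI impI)
    fix k assume "min y ?Y \<le> k \<and> k < max y ?Y"
    then have k: "?Y < k + 1" "k + 1 \<le> y" using retract_y_spec(1)[OF xy] by auto
    have "vlinked E x y (k + 1)" using linked_between[OF retract_y_spec(2)[OF xy]] k by simp
    then have "(x, k + 1) \<in> V" using vlinked_in_V xy by blast
    moreover have "hlinked E (k + 1) x x'" using span k by simp
    ultimately have "(x', k + 1) \<in> V" using hlinked_in_V by blast
    then show "vedge E x' k" using row_meets_base_if_no_lower_edge[of x' "k + 1"] no_base[OF k]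
      by auto
  qed
qed

definition retract :: "pixel \<Rightarrow> pixel" where
  "retract p = (retract_x (fst p) (snd p), retract_y (fst p) (snd p))"

lemma retract_spans:
  assumes xy: "(x, y) \<in> V" and X: "X = retract_x x y" and Y: "Y = retract_y x y"
  shows "hlinked E Y X c \<longleftrightarrow> hlinked E y x c" and "vlinked E X Y d \<longleftrightarrow> vlinked E x y d"
proof -
  have rows: "hlinked E Y x c \<longleftrightarrow> hlinked E y x c" for c
    using retract_y_row_span[OF xy order_refl retract_y_spec(1)[OF xy]] Y by simp
  have cols: "vlinked E X y d \<longleftrightarrow> vlinked E x y d" for d
    using retract_x_column_span[OF xy order_refl retract_x_spec(1)[OF xy]] X by simp
  have "hlinked E Y x X" using rows retract_x_spec(2)[OF xy] X by simp
  then have "hlinked E Y X x" using linked_sym by blast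
  then show "hlinked E Y X c \<longleftrightarrow> hlinked E y x c" using linked_cong rows by blast
  have "vlinked E X y Y" using cols retract_y_spec(2)[OF xy] Y by simp
  then have "vlinked E X Y y" using linked_sym by blast
  then show "vlinked E X Y d \<longleftrightarrow> vlinked E x y d" using linked_cong cols by blast
qed

lemma retract_in_large_vertices:
  assumes "p \<in> V"
  shows "retract p \<in> large_vertices V E S"
proof -
  obtain x y where p: "p = (x, y)" by fastforce
  then have xy: "(x, y) \<in> V" using assms by simp
  let ?X = "retract_x x y" and ?Y = "retract_y x y"
  have "vlinked E ?X y ?Y"
    using retract_x_column_span[OF xy order_refl retract_x_spec(1)[OF xy]] retract_y_spec(2)[OF xy]
      by simp
  then have "col_meets_base ?X ?Y" using retract_x_spec(3)[OF xy] col_meets_base_cong by blast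
  have "hlinked E ?Y x ?X"
    using retract_y_row_span[OF xy order_refl retract_y_spec(1)[OF xy]] retract_x_spec(2)[OF xy]
      by simp
  then have "row_meets_base ?X ?Y" using retract_y_spec(3)[OF xy] row_meets_base_cong by blast
  with \<open>col_meets_base ?X ?Y\<close> show ?thesis using p by (simp add: retract_def large_vertices_iff)
qed

lemma retract_fixes_large_vertices:
  assumes "p \<in> large_vertices V E S"
  shows "retract p = p"
proof -
  obtain x y where p: "p = (x, y)" by fastforce
  then have "(x, y) \<in> V" using assms large_vertices_subset by blast
  then show ?thesis
    using assms p retract_x_eq retract_y_eq by (simp add: retract_def large_vertices_iff)
qed

lemma retract_on_row:
  assumes "(x, y) \<in> V" "hlinked E y x l" "col_meets_base l y"
  shows "retract (l, y) = (l, retract_y x y)"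
  using retract_x_eq[OF hlinked_in_V[OF assms(2,1)] assms(3)] retract_y_row[OF assms(1,2)]
  by (simp add: retract_def)

lemma retract_on_column:
  assumes "(x, y) \<in> V" "vlinked E x y u" "row_meets_base x u"
  shows "retract (x, u) = (retract_x x y, u)"
  using retract_y_eq[OF vlinked_in_V[OF assms(2,1)] assms(3)] retract_x_column[OF assms(1,2)]
  by (simp add: retract_def)

lemma retract_tilt:
  assumes "p \<in> V"
  shows "retract (tilt E d p) = tilt E d (retract p)"
proof -
  obtain x y where p: "p = (x, y)" by fastforce
  then have xy: "(x, y) \<in> V" using assms by simp
  note spans = retract_spans[OF xy refl refl]
  show ?thesis
  proof (cases d)
    case L
    obtain l where l: "tilt E L (x, y) = (l, y)" "hlinked E y x l" "\<not> hedge E (l - 1) y"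
      by (rule tilt_L_end)
    have "col_meets_base l y" using col_meets_base_if_no_left_edge hlinked_in_V l(2,3) xy by blast
    then show ?thesis
      using L p l(1) retract_on_row[OF xy l(2)] spans(1) by (simp add: tilt_L retract_def)
  next
    case R
    obtain r where r: "tilt E R (x, y) = (r, y)" "hlinked E y x r" "\<not> hedge E r y"
      by (rule tilt_R_end)
    have "col_meets_base r y" using col_meets_base_if_no_right_edge hlinked_in_V r(2,3) xy by blast
    then show ?thesis
      using R p r(1) retract_on_row[OF xy r(2)] spans(1) by (simp add: tilt_R retract_def)
  next
    case U
    obtain u where u: "tilt E U (x, y) = (x, u)" "vlinked E x y u" "\<not> vedge E x u"
      by (rule tilt_U_end)
    have "row_meets_base x u" using row_meets_base_if_no_upper_edge vlinked_in_V u(2,3) xy by blast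
    then show ?thesis
      using U p u(1) retract_on_column[OF xy u(2)] spans(2) by (simp add: tilt_U retract_def)
  next
    case D
    obtain l where l: "tilt E D (x, y) = (x, l)" "vlinked E x y l" "\<not> vedge E x (l - 1)"
      by (rule tilt_D_end)
    have "row_meets_base x l" using row_meets_base_if_no_lower_edge vlinked_in_V l(2,3) xy by blast
    then show ?thesis
      using D p l(1) retract_on_column[OF xy l(2)] spans(2) by (simp add: tilt_D retract_def)
  qed
qed

lemma retract_full_tilt_edge:
  assumes "(p, q) \<in> full_tilt_edges V E" "retract p \<noteq> retract q"
  shows "(retract p, retract q) \<in> full_tilt_edges V E"
proof -
  obtain d where "p \<in> V" "q = tilt E d p" using assms(1) unfolding full_tilt_edges_def by blast
  moreover have "retract p \<in> V" using retract_in_large_vertices large_vertices_subset calculation(1)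
    by blast
  ultimately show ?thesis
    using assms(2) retract_tilt unfolding full_tilt_edges_def by fastforce
qed

sublocale retraction: graph_retraction V "full_tilt_edges V E" "large_vertices V E S" retract
  using finite_V full_tilt_edges_subset retract_in_large_vertices retract_fixes_large_vertices
    retract_full_tilt_edge large_vertices_subset
  by unfold_locales auto

lemma sinks_in_large_vertices: "S \<subseteq> large_vertices V E S"
  using sinks_in_large_base unfolding large_vertices_def by blast

end

lemma large_tilt_edges_eq:
  "large_tilt_edges V E S = full_tilt_edges V E \<inter> large_vertices V E S \<times> large_vertices V E S"
  unfolding large_tilt_edges_def by auto

theorem mainTheorem10:
  fixes V :: "pixel set" and E :: "pixel set set" and S :: "pixel set"
    and T :: "(pixel option \<times> pixel option) set" and w :: nat
  assumes "board V E"
    and "S \<subseteq> V"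
    and "arborescence_to (ext_vertices V) (ext_edges (full_tilt_edges V E) S) None T"
    and "tree_weight (full_tilt_edges V E) T = w"
  shows "\<exists>T'. arborescence_to (ext_vertices (large_vertices V E S))
              (ext_edges (large_tilt_edges V E S) S) None T'
          \<and> tree_weight (large_tilt_edges V E S) T' \<le> w"
proof -
  interpret board_with_sinks V E S using assms(1,2) by unfold_locales
  show ?thesis
    using retraction.arborescence_retract[OF sinks_in_large_vertices assms(3)] assms(4)
    by (simp add: large_tilt_edges_eq)
qed

end
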